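(* For every finite multiset $\Gamma$ of ILL formulae and every ILL formula $\varphi$: $\Gamma\vdash\varphi$ (derivability in $\mathrm{N_{ILL}}$) holds if and only if $\Gamma\vdash^*\varphi$.
   Context: Fix a set $\mathbb{A}$ of propositional atoms. ILL formulae: $\phi ::= p\in\mathbb{A} \mid \top \mid 0 \mid 1 \mid \phi\multimap\phi \mid \phi\otimes\phi \mid \phi\,\&\,\phi \mid \phi\oplus\phi \mid\ !\phi$. All multisets are finite; "$\Gamma,\Delta$" is multiset union. Natural deduction $\mathrm{N_{ILL}}$: $\Gamma\vdash\varphi$ is defined inductively by: (Ax) $\varphi\vdash\varphi$; ($\multimap$I) from $\Gamma,\phi\vdash\psi$ infer $\Gamma\vdash\phi\multimap\psi$; ($\multimap$E) from $\Gamma\vdash\phi\multimap\psi$ and $\Delta\vdash\phi$ infer $\Gamma,\Delta\vdash\psi$; ($\otimes$I) from $\Gamma\vdash\phi$, $\Delta\vdash\psi$ infer $\Gamma,\Delta\vdash\phi\otimes\psi$; ($\otimes$E) from $\Gamma\vdash\phi\otimes\psi$ and $\Delta,\phi,\psi\vdash\chi$ infer $\Gamma,\Delta\vdash\chi$; ($1$I) $\vdash 1$; ($1$E) from $\Gamma\vdash 1$, $\Delta\vdash\phi$ infer $\Gamma,\Delta\vdash\phi$; ($\&$I) from $\Gamma\vdash\phi$, $\Gamma\vdash\psi$ infer $\Gamma\vdash\phi\&\psi$; ($\&$E) from $\Gamma\vdash\phi\&\psi$ infer $\Gamma\vdash\phi$ and infer $\Gamma\vdash\psi$; ($\oplus$I)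 from $\Gamma\vdash\phi$ (or $\Gamma\vdash\psi$) infer $\Gamma\vdash\phi\oplus\psi$; ($\oplus$E) from $\Gamma\vdash\phi\oplus\psi$, $\Delta,\phi\vdash\chi$, $\Delta,\psi\vdash\chi$ infer $\Gamma,\Delta\vdash\chi$; ($\top$I) for $n\ge0$, from $\Gamma_i\vdash\phi_i$ ($i=1..n$) infer $\Gamma_1,\dots,\Gamma_n\vdash\top$; ($0$E) for $n\ge 0$, from $\Gamma_i\vdash\phi_i$ ($i=1..n$) and $\Delta\vdash 0$ infer $\Gamma_1,\dots,\Gamma_n,\Delta\vdash\chi$; (Prom$_n$) for $n\ge0$, from $\Gamma_i\vdash\,!\psi_i$ ($i=1..n$) and $!\psi_1,\dots,!\psi_n\vdash\phi$ infer $\Gamma_1,\dots,\Gamma_n\vdash\,!\phi$; (Der) from $\Gamma\vdash\,!\phi$, $\Delta,\phi\vdash\psi$ infer $\Gamma,\Delta\vdash\psi$; (Wk) from $\Gamma\vdash\,!\phi$, $\Delta\vdash\psi$ infer $\Gamma,\Delta\vdash\psi$; (Ctr) from $\Gamma\vdash\,!\phi$, $\Delta,!\phi,!\phi\vdash\psi$ infer $\Gamma,\Delta\vdash\psi$. Inference schemas: a sequent is $\Psi\Rightarrow\psi$ ($\Psi$ a multiset of formulae); a box is a multiset of sequents; a schema is $\langle\mathbf{A},\mathbf{S},\varphi\rangle$ with $\mathbf{A}$ a multiset of boxes, $\mathbf{S}$ a multiset of sequents, $\varphi$ a formula. The set $\mathfrak{N}$ consists of all instances (for all formulae $\varphi,\psi,\chi,\varphi_i$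 and all $n\ge0$) of: $\langle[\{\varphi\Rightarrow\psi\}],\varnothing,\varphi\multimap\psi\rangle$; $\langle[\{\Rightarrow\varphi\multimap\psi\},\{\Rightarrow\varphi\}],\varnothing,\psi\rangle$; $\langle[\{\Rightarrow\varphi\},\{\Rightarrow\psi\}],\varnothing,\varphi\otimes\psi\rangle$; $\langle[\{\Rightarrow\varphi\otimes\psi\},\{\varphi,\psi\Rightarrow\chi\}],\varnothing,\chi\rangle$; $\langle\varnothing,\varnothing,1\rangle$; $\langle[\{\Rightarrow1\},\{\Rightarrow\chi\}],\varnothing,\chi\rangle$; $\langle[\{\Rightarrow\varphi,\ \Rightarrow\psi\}],\varnothing,\varphi\&\psi\rangle$; $\langle[\{\Rightarrow\varphi\&\psi\}],\varnothing,\varphi\rangle$; $\langle[\{\Rightarrow\varphi\&\psi\}],\varnothing,\psi\rangle$; $\langle[\{\Rightarrow\varphi\}],\varnothing,\varphi\oplus\psi\rangle$; $\langle[\{\Rightarrow\psi\}],\varnothing,\varphi\oplus\psi\rangle$; $\langle[\{\Rightarrow\varphi\oplus\psi\},\{\varphi\Rightarrow\chi,\ \psi\Rightarrow\chi\}],\varnothing,\chi\rangle$; $\langle[\{\Rightarrow\varphi_1\},\dots,\{\Rightarrow\varphi_n\}],\varnothing,\top\rangle$; $\langle[\{\Rightarrow\varphi_1\},\dots,\{\Rightarrow\varphi_n\},\{\Rightarrow0\}],\varnothing,\chi\rangle$; $\langle\varnothing,[\Rightarrow\varphi],!\varphi\rangle$; $\langle[\{\Rightarrow!\varphi\},\{\varphi\Rightarrow\psi\}],\varnothing,\psi\rangle$;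 $\langle[\{\Rightarrow!\varphi\},\{\Rightarrow\psi\}],\varnothing,\psi\rangle$; $\langle[\{\Rightarrow!\varphi\},\{!\varphi,!\varphi\Rightarrow\psi\}],\varnothing,\psi\rangle$. $\vdash^*$ is defined inductively: (Ref) $\varphi\vdash^*\varphi$; (App) if $\langle\mathbf{A},\mathbf{S},\varphi\rangle\in\mathfrak{N}$ with $\mathbf{A}=\{\mathbf{T}_1,\dots,\mathbf{T}_m\}$, and there are multisets of formulae $\Gamma_1,\dots,\Gamma_n$ ($n\ge m$) and formulae $\delta_{m+1},\dots,\delta_n$ such that $\Gamma_i,\Psi\vdash^*\psi$ for every $i\le m$ and every $\Psi\Rightarrow\psi\in\mathbf{T}_i$, $\Gamma_j\vdash^*!\delta_j$ for every $m<j\le n$, and $!\delta_{m+1},\dots,!\delta_n,\Theta\vdash^*\theta$ for every $\Theta\Rightarrow\theta\in\mathbf{S}$, then $\Gamma_1,\dots,\Gamma_n\vdash^*\varphi$. *)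

theory Defs
  imports Main "HOL-Library.Multiset"
begin

datatype 'a form =
    Atom 'a | Top | Zero | One
  | Lolli "'a form" "'a form"
  | Tensor "'a form" "'a form"
  | With "'a form" "'a form"
  | Plus "'a form" "'a form"
  | Bang "'a form"

text \<open>Natural deduction N_ILL. Rules with n premises (TopI, ZeroE, Prom_n) are
  rendered with a list of premise pairs (Gamma_i, phi_i).\<close>
inductive nd :: "'a form multiset \<Rightarrow> 'a form \<Rightarrow> bool" where
  Ax: "nd {#\<phi>#} \<phi>"
| LolliI: "nd (\<Gamma> + {#\<phi>#}) \<psi> \<Longrightarrow> nd \<Gamma> (Lolli \<phi> \<psi>)"
| LolliE: "nd \<Gamma> (Lolli \<phi> \<psi>) \<Longrightarrow> nd \<Delta> \<phi> \<Longrightarrow> nd (\<Gamma> + \<Delta>) \<psi>"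
| TensorI: "nd \<Gamma> \<phi> \<Longrightarrow> nd \<Delta> \<psi> \<Longrightarrow> nd (\<Gamma> + \<Delta>) (Tensor \<phi> \<psi>)"
| TensorE: "nd \<Gamma> (Tensor \<phi> \<psi>) \<Longrightarrow> nd (\<Delta> + {#\<phi>, \<psi>#}) \<chi> \<Longrightarrow> nd (\<Gamma> + \<Delta>) \<chi>"
| OneI: "nd {#} One"
| OneE: "nd \<Gamma> One \<Longrightarrow> nd \<Delta> \<phi> \<Longrightarrow> nd (\<Gamma> + \<Delta>) \<phi>"
| WithI: "nd \<Gamma> \<phi> \<Longrightarrow> nd \<Gamma> \<psi> \<Longrightarrow> nd \<Gamma> (With \<phi> \<psi>)"
| WithE1: "nd \<Gamma> (With \<phi> \<psi>) \<Longrightarrow> nd \<Gamma> \<phi>"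
| WithE2: "nd \<Gamma> (With \<phi> \<psi>) \<Longrightarrow> nd \<Gamma> \<psi>"
| PlusI1: "nd \<Gamma> \<phi> \<Longrightarrow> nd \<Gamma> (Plus \<phi> \<psi>)"
| PlusI2: "nd \<Gamma> \<psi> \<Longrightarrow> nd \<Gamma> (Plus \<phi> \<psi>)"
| PlusE: "nd \<Gamma> (Plus \<phi> \<psi>) \<Longrightarrow> nd (\<Delta> + {#\<phi>#}) \<chi> \<Longrightarrow> nd (\<Delta> + {#\<psi>#}) \<chi>
          \<Longrightarrow> nd (\<Gamma> + \<Delta>) \<chi>"
| TopI: "\<forall>(G, f) \<in> set ps. nd G f \<Longrightarrow> nd (sum_list (map fst ps)) Top"
| ZeroE: "\<forall>(G, f) \<in> set ps. nd G f \<Longrightarrow> nd \<Delta> Zero \<Longrightarrow> nd (sum_list (map fst ps) + \<Delta>) \<chi>"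
| Prom: "\<forall>(G, d) \<in> set ps. nd G (Bang d) \<Longrightarrow> nd (mset (map (\<lambda>(G, d). Bang d) ps)) \<phi>
          \<Longrightarrow> nd (sum_list (map fst ps)) (Bang \<phi>)"
| Der: "nd \<Gamma> (Bang \<phi>) \<Longrightarrow> nd (\<Delta> + {#\<phi>#}) \<psi> \<Longrightarrow> nd (\<Gamma> + \<Delta>) \<psi>"
| Wk: "nd \<Gamma> (Bang \<phi>) \<Longrightarrow> nd \<Delta> \<psi> \<Longrightarrow> nd (\<Gamma> + \<Delta>) \<psi>"
| Ctr: "nd \<Gamma> (Bang \<phi>) \<Longrightarrow> nd (\<Delta> + {#Bang \<phi>, Bang \<phi>#}) \<psi> \<Longrightarrow> nd (\<Gamma> + \<Delta>) \<psi>"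

type_synonym 'a sequent = "'a form multiset \<times> 'a form"
type_synonym 'a box = "'a sequent multiset"
type_synonym 'a schema = "'a box multiset \<times> 'a sequent multiset \<times> 'a form"

abbreviation sq :: "'a form list \<Rightarrow> 'a form \<Rightarrow> 'a sequent" where
  "sq Ps p \<equiv> (mset Ps, p)"

inductive_set schemasN :: "'a schema set" where
  "({# {# sq [\<phi>] \<psi> #} #}, {#}, Lolli \<phi> \<psi>) \<in> schemasN"
| "({# {# sq [] (Lolli \<phi> \<psi>) #}, {# sq [] \<phi> #} #}, {#}, \<psi>) \<in> schemasN"
| "({# {# sq [] \<phi> #}, {# sq [] \<psi> #} #}, {#}, Tensor \<phi> \<psi>) \<in> schemasN"
| "({# {# sq [] (Tensor \<phi> \<psi>) #}, {# sq [\<phi>, \<psi>] \<chi> #} #}, {#}, \<chi>) \<in> schemasN"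
| "({#}, {#}, One) \<in> schemasN"
| "({# {# sq [] One #}, {# sq [] \<chi> #} #}, {#}, \<chi>) \<in> schemasN"
| "({# {# sq [] \<phi>, sq [] \<psi> #} #}, {#}, With \<phi> \<psi>) \<in> schemasN"
| "({# {# sq [] (With \<phi> \<psi>) #} #}, {#}, \<phi>) \<in> schemasN"
| "({# {# sq [] (With \<phi> \<psi>) #} #}, {#}, \<psi>) \<in> schemasN"
| "({# {# sq [] \<phi> #} #}, {#}, Plus \<phi> \<psi>) \<in> schemasN"
| "({# {# sq [] \<psi> #} #}, {#}, Plus \<phi> \<psi>) \<in> schemasN"
| "({# {# sq [] (Plus \<phi> \<psi>) #}, {# sq [\<phi>] \<chi>, sq [\<psi>] \<chi> #} #}, {#}, \<chi>) \<in> schemasN"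
| "(mset (map (\<lambda>f. {# sq [] f #}) fs), {#}, Top) \<in> schemasN"
| "(mset (map (\<lambda>f. {# sq [] f #}) fs) + {# {# sq [] Zero #} #}, {#}, \<chi>) \<in> schemasN"
| "({#}, {# sq [] \<phi> #}, Bang \<phi>) \<in> schemasN"
| "({# {# sq [] (Bang \<phi>) #}, {# sq [\<phi>] \<psi> #} #}, {#}, \<psi>) \<in> schemasN"
| "({# {# sq [] (Bang \<phi>) #}, {# sq [] \<psi> #} #}, {#}, \<psi>) \<in> schemasN"
| "({# {# sq [] (Bang \<phi>) #}, {# sq [Bang \<phi>, Bang \<phi>] \<psi> #} #}, {#}, \<psi>) \<in> schemasN"

text \<open>The boxes T_1..T_m of A are enumerated
  by a list Ts with mset Ts = A, paired with contexts Gs (Gamma_1..Gamma_m); the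
  extra pairs (Gamma_j, delta_j) for m < j <= n are given by the list ext.\<close>
inductive star :: "'a form multiset \<Rightarrow> 'a form \<Rightarrow> bool" where
  Ref: "star {#\<phi>#} \<phi>"
| App: "(A, S, \<phi>) \<in> schemasN \<Longrightarrow> mset Ts = A \<Longrightarrow> length Gs = length Ts \<Longrightarrow>
        \<forall>(T, G) \<in> set (zip Ts Gs). \<forall>(\<Psi>, \<psi>) \<in> set_mset T. star (G + \<Psi>) \<psi> \<Longrightarrow>
        \<forall>(G, d) \<in> set ext. star G (Bang d) \<Longrightarrow>
        \<forall>(\<Theta>, \<theta>) \<in> set_mset S. star (mset (map (\<lambda>(G, d). Bang d) ext) + \<Theta>) \<theta> \<Longrightarrow>
        star (sum_list Gs + sum_list (map fst ext)) \<phi>"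

end

theory Submission
  imports Defs
begin

text \<open>Every rule of \<open>N_ILL\<close> is an instance of a schema of \<open>\<frak>N\<close> without promotion part,
  except \<open>Prom\<^sub>n\<close>, which is the schema for \<open>!\<close> with the premises \<open>\<Gamma>\<^sub>j \<turnstile> !\<delta>\<^sub>j\<close> as
  promotion part; so \<open>N_ILL\<close> derivations translate rule by rule. Conversely, an application of
  a schema without promotion sequents is an \<open>N_ILL\<close> rule once the contexts \<open>\<Gamma>\<^sub>i\<close> are
  matched with the boxes, which form only a multiset and so are enumerated in some arbitrary
  order; the surplus contexts \<open>\<Gamma>\<^sub>j \<turnstile> !\<delta>\<^sub>j\<close> are then discarded by \<open>Wk\<close>. The only schema
  with a promotion sequent is the one for \<open>!\<close>, and its applications are exactly \<open>Prom\<^sub>n\<close>.\<close>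

lemma list_all2_reorder_left_sum_list:
  fixes ys :: "'b::comm_monoid_add list"
  assumes "list_all2 R xs ys" "mset xs' = mset xs"
  obtains ys' where "list_all2 R xs' ys'" "sum_list ys = sum_list ys'"
  using list_all2_reorder_left_invariance[OF assms] by (metis sum_mset_sum_list)

lemma list_all2_mset_left_doubletonE:
  fixes ys :: "'b::comm_monoid_add list"
  assumes "mset xs = {#a, b#}" "list_all2 R xs ys"
  obtains y z where "R a y" "R b z" "sum_list ys = y + z"
proof -
  obtain ys' where "list_all2 R [a, b] ys'" "sum_list ys = sum_list ys'"
    using list_all2_reorder_left_sum_list[OF assms(2), of "[a, b]"] assms(1) by auto
  then show thesis
    using that by (auto simp: list_all2_Cons1)
qed

definition box_holds ::
    "('a form multiset \<Rightarrow> 'a form \<Rightarrow> bool) \<Rightarrow> 'a box \<Rightarrow> 'a form multiset \<Rightarrow> bool" where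
  "box_holds R T \<Gamma> \<longleftrightarrow> (\<forall>(\<Psi>, \<psi>)\<in>#T. R (\<Gamma> + \<Psi>) \<psi>)"

lemma list_all2_box_holds_iff:
  "list_all2 (box_holds R) Ts Gs \<longleftrightarrow>
     length Gs = length Ts \<and> (\<forall>(T, G)\<in>set (zip Ts Gs). \<forall>(\<Psi>, \<psi>)\<in>#T. R (G + \<Psi>) \<psi>)"
  by (auto simp: list_all2_iff box_holds_def)

lemma star_App_boxes:
  assumes "(A, {#}, \<phi>) \<in> schemasN" "mset Ts = A" "list_all2 (box_holds star) Ts Gs"
  shows "star (sum_list Gs) \<phi>"
  using star.App[OF assms(1,2), of Gs "[]"] assms(3) by (simp add: list_all2_box_holds_iff)

lemma star_App_one_box:
  "({#T#}, {#}, \<phi>) \<in> schemasN \<Longrightarrow> box_holds star T \<Gamma> \<Longrightarrow> star \<Gamma> \<phi>"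
  using star_App_boxes[of _ \<phi> "[T]" "[\<Gamma>]"] by simp

lemma star_App_two_boxes:
  "({#T, U#}, {#}, \<phi>) \<in> schemasN \<Longrightarrow> box_holds star T \<Gamma> \<Longrightarrow> box_holds star U \<Delta> \<Longrightarrow>
    star (\<Gamma> + \<Delta>) \<phi>"
  using star_App_boxes[of _ \<phi> "[T, U]" "[\<Gamma>, \<Delta>]"] by simp

lemma nd_imp_star: "nd \<Gamma> \<phi> \<Longrightarrow> star \<Gamma> \<phi>"
proof (induction rule: nd.induct)
  case OneI
  show ?case
    using star_App_boxes[OF schemasN.intros(5), of "[]" "[]"] by simp
next
  case (TopI ps)
  then show ?case
    using star_App_boxes[OF schemasN.intros(13)[of "map snd ps"],
        of "map (\<lambda>p. {#sq [] (snd p)#}) ps" "map fst ps"]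
    by (auto simp: list_all2_map1 list_all2_map2 list_all2_same box_holds_def comp_def
        case_prod_beta)
next
  case (ZeroE ps \<Delta> \<chi>)
  then show ?case
    using star_App_boxes[OF schemasN.intros(14)[of "map snd ps"],
        of "map (\<lambda>p. {#sq [] (snd p)#}) ps @ [{#sq [] Zero#}]" "map fst ps @ [\<Delta>]"]
    by (auto simp: list_all2_appendI list_all2_map1 list_all2_map2 list_all2_same box_holds_def
        comp_def case_prod_beta)
next
  case (Prom ps \<phi>)
  then show ?case
    using star.App[OF schemasN.intros(15)[of \<phi>], of "[]" "[]" ps] by auto
qed (auto intro: star.Ref star_App_one_box star_App_two_boxes schemasN.intros
    simp: box_holds_def)

lemma nd_TopI_all2:
  assumes "list_all2 (\<lambda>\<phi> \<Gamma>. nd \<Gamma> \<phi>) fs Gs"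
  shows "nd (sum_list Gs) Top"
proof -
  have "\<forall>(\<Gamma>, \<phi>)\<in>set (zip Gs fs). nd \<Gamma> \<phi>"
    using assms by (auto simp: list_all2_conv_all_nth set_zip)
  from nd.TopI[OF this] show ?thesis
    using list_all2_lengthD[OF assms] by simp
qed

lemma nd_ZeroE_all2:
  assumes "list_all2 (\<lambda>\<phi> \<Gamma>. nd \<Gamma> \<phi>) fs Gs" "nd \<Delta> Zero"
  shows "nd (sum_list Gs + \<Delta>) \<chi>"
proof -
  have "\<forall>(\<Gamma>, \<phi>)\<in>set (zip Gs fs). nd \<Gamma> \<phi>"
    using assms by (auto simp: list_all2_conv_all_nth set_zip)
  from nd.ZeroE[OF this assms(2)] show ?thesis
    using list_all2_lengthD[OF assms(1)] by simp
qed

lemma nd_weaken_bangs: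
  "\<forall>(\<Gamma>, \<delta>)\<in>set ps. nd \<Gamma> (Bang \<delta>) \<Longrightarrow> nd \<Delta> \<psi> \<Longrightarrow> nd (\<Delta> + sum_list (map fst ps)) \<psi>"
proof (induction ps)
  case Nil
  then show ?case by simp
next
  case (Cons p ps)
  then have "nd (fst p + (\<Delta> + sum_list (map fst ps))) \<psi>"
    by (intro nd.Wk[of "fst p" "snd p"]) (auto simp: case_prod_beta)
  then show ?case
    by (simp add: ac_simps)
qed

lemma nd_App_boxes:
  assumes "(A, {#}, \<phi>) \<in> schemasN" "mset Ts = A" "list_all2 (box_holds nd) Ts Gs"
  shows "nd (sum_list Gs) \<phi>"
  using assms(1)
proof cases
  case (13 fs)
  then obtain Gs' where "list_all2 (box_holds nd) (map (\<lambda>f. {#sq [] f#}) fs) Gs'"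
    and "sum_list Gs = sum_list Gs'"
    using list_all2_reorder_left_sum_list[OF assms(3)] assms(2) by metis
  with 13 show ?thesis
    by (auto simp: list_all2_map1 box_holds_def intro: nd_TopI_all2)
next
  case (14 fs)
  then obtain Gs'
    where "list_all2 (box_holds nd) (map (\<lambda>f. {#sq [] f#}) fs @ [{#sq [] Zero#}]) Gs'"
      and "sum_list Gs = sum_list Gs'"
    using list_all2_reorder_left_sum_list[OF assms(3)] assms(2)
    by (metis mset_append mset_single_iff_right)
  then show ?thesis
    by (auto simp: list_all2_append1 list_all2_map1 list_all2_Cons1 box_holds_def
        intro: nd_ZeroE_all2)
qed (use assms(2,3) in \<open>auto elim!: list_all2_mset_left_doubletonE
    simp: list_all2_Cons1 box_holds_def intro: nd.intros[simplified]\<close>)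

lemma star_imp_nd: "star \<Gamma> \<phi> \<Longrightarrow> nd \<Gamma> \<phi>"
proof (induction rule: star.induct)
  case (Ref \<phi>)
  show ?case by (rule nd.Ax)
next
  case (App A S \<phi> Ts Gs ext)
  have bangs: "\<forall>(\<Gamma>, \<delta>)\<in>set ext. nd \<Gamma> (Bang \<delta>)"
    using App.IH(2) by fastforce
  show ?case
  proof (cases "S = {#}")
    case True
    have "list_all2 (box_holds nd) Ts Gs"
      using App.hyps(3) App.IH(1) by (fastforce simp: list_all2_box_holds_iff)
    with App.hyps(1,2) True have "nd (sum_list Gs) \<phi>"
      using nd_App_boxes by blast
    then show ?thesis
      using nd_weaken_bangs[OF bangs] by blast
  next
    case False
    with App.hyps(1) obtain \<psi> where "A = {#}" "S = {#sq [] \<psi>#}" "\<phi> = Bang \<psi>"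
      by (cases rule: schemasN.cases) auto
    moreover from this have "nd (mset (map (\<lambda>(\<Gamma>, \<delta>). Bang \<delta>) ext)) \<psi>"
      using App.IH(3) by simp
    ultimately show ?thesis
      using nd.Prom[OF bangs] App.hyps(2,3) by simp
  qed
qed

theorem theorem3:
  fixes \<Gamma> :: "'a form multiset" and \<phi> :: "'a form"
  shows "nd \<Gamma> \<phi> \<longleftrightarrow> star \<Gamma> \<phi>"
  using nd_imp_star star_imp_nd by blast

end
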